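(* Let $Q\in\mathcal N$ be an intrinsic vanishing point and $z$ a local holomorphic coordinate with $z(Q)=0$ and metric $h(z,\bar z)dz\,d\bar z$. Expand $-\frac{h_z}{h}=c_0+c_1\bar z+c_2z+c_3z^2+c_4\bar z^2+c_5z\bar z+O(|z|^3)$, let $\gamma_1=-c_0/2$, and set $\nu_2=c_5-2\gamma_1c_1$, $\nu_3=c_4-c_1\bar\gamma_1$. Then $\nu_2=\nu_3=0$. Consequently the normal-form coordinate $w=z+\gamma_1z^2+\gamma_2z^3+\gamma_3z^4$ (with $\gamma_2,\gamma_3$ determined by $c_2+2\gamma_1c_0+6\gamma_2=0$, $12\gamma_3+c_3+2\gamma_1c_2+3\gamma_2c_0=0$) of a solution of the Schrödinger map flow satisfies $i\partial_tw+\partial_x^2w=c_1\bar w(\partial_xw)^2+O(|w|^3)(\partial_xw)^2$.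
   Context: $Q$ is an intrinsic vanishing point if $[\ln h]_z(0)[\ln h]_{z\bar z}(0)-[\ln h]_{z\bar zz}(0)=0$ (Wirtinger derivatives). In the coordinate $z$ the 1D Schrödinger map flow reads $i\partial_tz+\partial_x^2z=-\frac{h_z}{h}(\partial_xz)^2$ (convention $J=$ multiplication by $i$; the paper writes the right side with the opposite sign). *)

theory Defs
  imports "HOL-Analysis.Analysis"
begin

definition wirt_z :: "(complex \<Rightarrow> complex) \<Rightarrow> complex \<Rightarrow> complex" where
  "wirt_z f z = (frechet_derivative f (at z) 1 - \<i> * frechet_derivative f (at z) \<i>) / 2"

definition wirt_zb :: "(complex \<Rightarrow> complex) \<Rightarrow> complex \<Rightarrow> complex" where
  "wirt_zb f z = (frechet_derivative f (at z) 1 + \<i> * frechet_derivative f (at z) \<i>) / 2"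

fun Ck_on :: "nat \<Rightarrow> complex set \<Rightarrow> (complex \<Rightarrow> complex) \<Rightarrow> bool" where
  "Ck_on 0 S f = continuous_on S f"
| "Ck_on (Suc k) S f = ((\<forall>z\<in>S. f differentiable (at z)) \<and> Ck_on k S (wirt_z f) \<and> Ck_on k S (wirt_zb f))"

definition smooth_on :: "complex set \<Rightarrow> (complex \<Rightarrow> complex) \<Rightarrow> bool" where
  "smooth_on S f = (\<forall>k. Ck_on k S f)"

definition intrinsic_vanishing_at0 :: "(complex \<Rightarrow> real) \<Rightarrow> bool" where
  "intrinsic_vanishing_at0 h = (let L = (\<lambda>z. complex_of_real (ln (h z))) in
     wirt_z L 0 * wirt_zb (wirt_z L) 0 - wirt_z (wirt_zb (wirt_z L)) 0 = 0)"

definition pt :: "(real \<Rightarrow> real \<Rightarrow> complex) \<Rightarrow> real \<Rightarrow> real \<Rightarrow> complex" where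
  "pt u t x = vector_derivative (\<lambda>s. u s x) (at t)"

definition px :: "(real \<Rightarrow> real \<Rightarrow> complex) \<Rightarrow> real \<Rightarrow> real \<Rightarrow> complex" where
  "px u t x = vector_derivative (\<lambda>y. u t y) (at x)"

text \<open>u is a solution of the 1D Schroedinger map flow (in the coordinate z, J = multiplication
by i) on the open set U, with values in S:  i u_t + u_xx = -(h_z/h)(u) (u_x)^2.\<close>

definition SM_solution ::
  "(complex \<Rightarrow> real) \<Rightarrow> complex set \<Rightarrow> (real \<times> real) set \<Rightarrow> (real \<Rightarrow> real \<Rightarrow> complex) \<Rightarrow> bool" where
  "SM_solution h S U u = (open U \<and> (\<forall>(t,x)\<in>U. u t x \<in> S
      \<and> (\<lambda>s. u s x) differentiable (at t)
      \<and> (\<lambda>y. u t y) differentiable (at x)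
      \<and> (\<lambda>y. px u t y) differentiable (at x)
      \<and> \<i> * pt u t x + px (px u) t x
          = - (wirt_z (\<lambda>z. complex_of_real (h z)) (u t x) / complex_of_real (h (u t x)))
              * (px u t x)\<^sup>2))"

end

theory Submission
  imports Defs
begin

text \<open>Let F = -h_z/h = -(ln h)_z. As ln h is real and mixed Wirtinger derivatives commute,
  F_zbar = -(ln h)_{z zbar} is real-valued, so (F_zbar)_zbar is the conjugate of (F_zbar)_z.
  Identifying c0, c1, c4, c5 with Taylor coefficients of F at 0, this says that c1 is real and
  c4 = conj(c5)/2, while the vanishing condition reads c5 = -c0 c1; together these give
  nu2 = nu3 = 0. For the normal form, the holomorphic change of coordinate w = phi(u) turns the
  flow into i w_t + w_xx = (phi'(u) F(u) + phi''(u)) u_x^2, and an explicit polynomial identity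
  shows that phi' P + phi'' - c1 conj(phi) phi'^2, with P the quadratic Taylor polynomial of F,
  vanishes to third order at 0.\<close>

lemma real_linear_complex_decomp:
  fixes D :: "complex \<Rightarrow> complex"
  assumes "linear D"
  shows "D v = (D 1 - \<i> * D \<i>) / 2 * v + (D 1 + \<i> * D \<i>) / 2 * cnj v"
proof -
  have "v = Re v *\<^sub>R 1 + Im v *\<^sub>R \<i>"
    by (simp add: complex_eq_iff)
  then have "D v = Re v *\<^sub>R D 1 + Im v *\<^sub>R D \<i>"
    by (metis assms linear_add linear_scale)
  also have "\<dots> = (D 1 - \<i> * D \<i>) / 2 * (Re v + \<i> * Im v) + (D 1 + \<i> * D \<i>) / 2 * (Re v - \<i> * Im v)"
    by (simp add: scaleR_conv_of_real field_simps)
  also have "\<dots> = (D 1 - \<i> * D \<i>) / 2 * v + (D 1 + \<i> * D \<i>) / 2 * cnj v"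
    by (simp add: complex_eq_iff)
  finally show ?thesis .
qed

lemma has_derivative_wirt:
  assumes "f differentiable (at z)"
  shows "(f has_derivative (\<lambda>v. wirt_z f z * v + wirt_zb f z * cnj v)) (at z)"
proof -
  have d: "(f has_derivative frechet_derivative f (at z)) (at z)"
    using assms frechet_derivative_works by blast
  have "frechet_derivative f (at z) = (\<lambda>v. wirt_z f z * v + wirt_zb f z * cnj v)"
    unfolding wirt_z_def wirt_zb_def
    by (rule ext, rule real_linear_complex_decomp[OF has_derivative_linear[OF d]])
  with d show ?thesis by simp
qed

lemma wirt_from_has_derivative:
  assumes "(f has_derivative D) (at z)" and "\<And>v. D v = a * v + b * cnj v"
  shows "wirt_z f z = a" "wirt_zb f z = b"
proof -
  have "frechet_derivative f (at z) = (\<lambda>v. a * v + b * cnj v)"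
    using frechet_derivative_at[OF assms(1)] assms(2) by auto
  then show "wirt_z f z = a" "wirt_zb f z = b"
    by (simp_all add: wirt_z_def wirt_zb_def algebra_simps)
qed

lemma wirt_cong_open:
  assumes "open X" "z \<in> X" "\<And>x. x \<in> X \<Longrightarrow> f x = g x"
  shows "wirt_z f z = wirt_z g z" "wirt_zb f z = wirt_zb g z"
proof -
  have "(f has_derivative D) (at z) \<longleftrightarrow> (g has_derivative D) (at z)" for D
    using has_derivative_transform_within_open[of f D z UNIV X g]
      has_derivative_transform_within_open[of g D z UNIV X f] assms by auto
  then have "frechet_derivative f (at z) = frechet_derivative g (at z)"
    unfolding frechet_derivative_def by simp
  then show "wirt_z f z = wirt_z g z" "wirt_zb f z = wirt_zb g z"
    unfolding wirt_z_def wirt_zb_def by simp_all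
qed

lemma differentiable_cong_open:
  assumes "open X" "z \<in> X" "\<And>x. x \<in> X \<Longrightarrow> f x = g x" "f differentiable (at z)"
  shows "g differentiable (at z)"
  using assms has_derivative_transform_within_open[of f _ z UNIV X g]
  unfolding differentiable_def by blast

lemma wirt_const: "wirt_z (\<lambda>x. c) z = 0" "wirt_zb (\<lambda>x. c) z = 0"
  by (simp_all add: wirt_z_def wirt_zb_def)

lemma wirt_add:
  assumes "f differentiable (at z)" "g differentiable (at z)"
  shows "wirt_z (\<lambda>x. f x + g x) z = wirt_z f z + wirt_z g z"
    "wirt_zb (\<lambda>x. f x + g x) z = wirt_zb f z + wirt_zb g z"
  using wirt_from_has_derivative[OF has_derivative_add[OF has_derivative_wirt[OF assms(1)]
      has_derivative_wirt[OF assms(2)]], of "wirt_z f z + wirt_z g z" "wirt_zb f z + wirt_zb g z"]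
  by (simp_all add: algebra_simps)

lemma wirt_mult:
  assumes "f differentiable (at z)" "g differentiable (at z)"
  shows "wirt_z (\<lambda>x. f x * g x) z = wirt_z f z * g z + f z * wirt_z g z"
    "wirt_zb (\<lambda>x. f x * g x) z = wirt_zb f z * g z + f z * wirt_zb g z"
  using wirt_from_has_derivative[OF has_derivative_mult[OF has_derivative_wirt[OF assms(1)]
      has_derivative_wirt[OF assms(2)]],
      of "wirt_z f z * g z + f z * wirt_z g z" "wirt_zb f z * g z + f z * wirt_zb g z"]
  by (simp_all add: algebra_simps)

lemma wirt_uminus:
  assumes "f differentiable (at z)"
  shows "wirt_z (\<lambda>x. - f x) z = - wirt_z f z" "wirt_zb (\<lambda>x. - f x) z = - wirt_zb f z"
  using wirt_from_has_derivative[OF has_derivative_minus[OF has_derivative_wirt[OF assms]],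
      of "- wirt_z f z" "- wirt_zb f z"]
  by simp_all

lemma wirt_inverse:
  assumes "f differentiable (at z)" "f z \<noteq> 0"
  shows "wirt_z (\<lambda>x. inverse (f x)) z = - (wirt_z f z * (inverse (f z) * inverse (f z)))"
    "wirt_zb (\<lambda>x. inverse (f x)) z = - (wirt_zb f z * (inverse (f z) * inverse (f z)))"
  using wirt_from_has_derivative[OF Deriv.has_derivative_inverse[OF assms(2)
      has_derivative_wirt[OF assms(1)]],
      of "- (wirt_z f z * (inverse (f z) * inverse (f z)))"
        "- (wirt_zb f z * (inverse (f z) * inverse (f z)))"]
  by (simp_all add: algebra_simps)

lemma wirt_cnj:
  assumes "f differentiable (at z)"
  shows "wirt_z (\<lambda>x. cnj (f x)) z = cnj (wirt_zb f z)"
    "wirt_zb (\<lambda>x. cnj (f x)) z = cnj (wirt_z f z)"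
  using wirt_from_has_derivative[OF has_derivative_cnj[OF has_derivative_wirt[OF assms]],
      of "cnj (wirt_zb f z)" "cnj (wirt_z f z)"]
  by (simp_all add: algebra_simps)

lemma wirt_zb_real_valued:
  assumes "open X" "z \<in> X" "\<And>x. x \<in> X \<Longrightarrow> cnj (f x) = f x" "f differentiable (at z)"
  shows "wirt_zb f z = cnj (wirt_z f z)"
proof -
  have "wirt_zb f z = wirt_zb (\<lambda>x. cnj (f x)) z"
    using wirt_cong_open(2)[OF assms(1,2), of f "\<lambda>x. cnj (f x)"] assms(3) by simp
  also have "\<dots> = cnj (wirt_z f z)" by (rule wirt_cnj[OF assms(4)])
  finally show ?thesis .
qed

lemma Ck_on_mono: "Ck_on (Suc k) S f \<Longrightarrow> Ck_on k S f"
proof (induction k arbitrary: f)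
  case 0
  then have "\<forall>z\<in>S. f differentiable (at z)" by simp
  then have "\<forall>z\<in>S. isCont f z" by (metis differentiable_imp_continuous_within)
  then show ?case by (simp add: continuous_at_imp_continuous_on)
next
  case (Suc k)
  from Suc.prems have "\<forall>z\<in>S. f differentiable (at z)"
    "Ck_on (Suc k) S (wirt_z f)" "Ck_on (Suc k) S (wirt_zb f)" by simp_all
  then show ?case using Suc.IH[of "wirt_z f"] Suc.IH[of "wirt_zb f"] by simp
qed

lemma Ck_on_cong:
  assumes "open S" "Ck_on k S f" "\<And>z. z \<in> S \<Longrightarrow> f z = g z"
  shows "Ck_on k S g"
  using assms(3,2)
proof (induction k arbitrary: f g)
  case 0
  then show ?case using continuous_on_cong[OF refl, of S f g] by simp
next
  case (Suc k)
  have "\<forall>z\<in>S. g differentiable (at z)"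
    using differentiable_cong_open[OF assms(1) _ Suc.prems(1)] Suc.prems(2) by simp
  moreover have "wirt_z f z = wirt_z g z" "wirt_zb f z = wirt_zb g z" if "z \<in> S" for z
    using wirt_cong_open[OF assms(1) that Suc.prems(1)] by simp_all
  then have "Ck_on k S (wirt_z g)" "Ck_on k S (wirt_zb g)"
    using Suc.IH Suc.prems(2) by (metis Ck_on.simps(2))+
  ultimately show ?case by simp
qed

lemma Ck_on_const: "Ck_on k S (\<lambda>x. c)"
proof (induction k arbitrary: c)
  case 0 then show ?case by simp
next
  case (Suc k)
  have "wirt_z (\<lambda>x. c) = (\<lambda>x. 0)" "wirt_zb (\<lambda>x. c) = (\<lambda>x. 0)"
    by (simp_all add: wirt_const fun_eq_iff)
  then show ?case using Suc.IH by simp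
qed

lemma Ck_on_add:
  assumes "open S"
  shows "Ck_on k S f \<Longrightarrow> Ck_on k S g \<Longrightarrow> Ck_on k S (\<lambda>x. f x + g x)"
proof (induction k arbitrary: f g)
  case 0 then show ?case by (auto intro: continuous_on_add)
next
  case (Suc k)
  have d: "Ck_on k S (\<lambda>x. wirt_z f x + wirt_z g x)" "Ck_on k S (\<lambda>x. wirt_zb f x + wirt_zb g x)"
    using Suc by simp_all
  have "Ck_on k S (wirt_z (\<lambda>x. f x + g x))"
    by (rule Ck_on_cong[OF assms d(1)]) (use Suc.prems wirt_add in auto)
  moreover have "Ck_on k S (wirt_zb (\<lambda>x. f x + g x))"
    by (rule Ck_on_cong[OF assms d(2)]) (use Suc.prems wirt_add in auto)
  ultimately show ?case using Suc.prems by simp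
qed

lemma Ck_on_mult:
  assumes "open S"
  shows "Ck_on k S f \<Longrightarrow> Ck_on k S g \<Longrightarrow> Ck_on k S (\<lambda>x. f x * g x)"
proof (induction k arbitrary: f g)
  case 0 then show ?case by (auto intro: continuous_on_mult)
next
  case (Suc k)
  have f: "Ck_on k S f" and g: "Ck_on k S g" using Suc.prems Ck_on_mono by blast+
  have "Ck_on k S (\<lambda>x. wirt_z f x * g x + f x * wirt_z g x)"
    "Ck_on k S (\<lambda>x. wirt_zb f x * g x + f x * wirt_zb g x)"
    using Suc f g by (simp_all add: Ck_on_add[OF assms])
  note d = this
  have "Ck_on k S (wirt_z (\<lambda>x. f x * g x))"
    by (rule Ck_on_cong[OF assms d(1)]) (use Suc.prems wirt_mult in auto)
  moreover have "Ck_on k S (wirt_zb (\<lambda>x. f x * g x))"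
    by (rule Ck_on_cong[OF assms d(2)]) (use Suc.prems wirt_mult in auto)
  ultimately show ?case using Suc.prems by simp
qed

lemma Ck_on_uminus:
  assumes "open S" "Ck_on k S f"
  shows "Ck_on k S (\<lambda>x. - f x)"
  using Ck_on_mult[OF assms(1) Ck_on_const[of k S "-1"] assms(2)] by simp

lemma Ck_on_inverse:
  assumes "open S"
  shows "Ck_on k S f \<Longrightarrow> \<forall>z\<in>S. f z \<noteq> 0 \<Longrightarrow> Ck_on k S (\<lambda>x. inverse (f x))"
proof (induction k arbitrary: f)
  case 0 then show ?case by (auto intro: continuous_on_inverse)
next
  case (Suc k)
  have "\<forall>z\<in>S. (\<lambda>x. inverse (f x)) differentiable (at z)"
  proof
    fix z assume "z \<in> S"
    then have "f differentiable (at z)" "f z \<noteq> 0" using Suc.prems by auto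
    then show "(\<lambda>x. inverse (f x)) differentiable (at z)"
      unfolding differentiable_def using Deriv.has_derivative_inverse by blast
  qed
  moreover have fz: "Ck_on k S (wirt_z f)" "Ck_on k S (wirt_zb f)" using Suc.prems(1) by simp_all
  have i: "Ck_on k S (\<lambda>x. inverse (f x))" using Suc.IH Ck_on_mono Suc.prems by blast
  have "Ck_on k S (wirt_z (\<lambda>x. inverse (f x)))"
    by (rule Ck_on_cong[OF assms Ck_on_uminus[OF assms Ck_on_mult[OF assms fz(1) Ck_on_mult[OF assms i i]]]])
      (use Suc.prems wirt_inverse in auto)
  moreover have "Ck_on k S (wirt_zb (\<lambda>x. inverse (f x)))"
    by (rule Ck_on_cong[OF assms Ck_on_uminus[OF assms Ck_on_mult[OF assms fz(2) Ck_on_mult[OF assms i i]]]])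
      (use Suc.prems wirt_inverse in auto)
  ultimately show ?case by simp
qed

lemma onorm_wirt_linear: "onorm (\<lambda>v. a * v + b * cnj v) \<le> norm a + norm b"
proof (rule onorm_le)
  fix v :: complex
  have "norm (a * v + b * cnj v) \<le> norm (a * v) + norm (b * cnj v)" by (rule norm_triangle_ineq)
  also have "\<dots> = (norm a + norm b) * norm v" by (simp add: norm_mult distrib_right)
  finally show "norm (a * v + b * cnj v) \<le> (norm a + norm b) * norm v" .
qed

lemma wirt_mean_value_bound:
  assumes "convex S" "x \<in> S" "y \<in> S"
    and "\<And>z. z \<in> S \<Longrightarrow> (g has_derivative (\<lambda>u. \<alpha> z * u + \<beta> z * cnj u)) (at z)"
    and "\<And>z. z \<in> S \<Longrightarrow> norm (\<alpha> z) + norm (\<beta> z) \<le> B"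
  shows "norm (g y - g x) \<le> B * norm (y - x)"
  by (rule differentiable_bound[OF assms(1) has_derivative_at_withinI[OF assms(4)]
        order_trans[OF onorm_wirt_linear assms(5)] assms(3,2)])

lemma wirt_linearization_estimate:
  assumes "g differentiable (at x)" "e > 0"
  shows "\<exists>d>0. \<forall>y. norm (y - x) < d \<longrightarrow>
    norm (g y - g x - (wirt_z g x * (y - x) + wirt_zb g x * cnj (y - x))) \<le> e * norm (y - x)"
  using has_derivative_wirt[OF assms(1)] assms(2) unfolding has_derivative_at_alt by blast

lemma wirt_increment_estimate:
  assumes "g differentiable (at x)" "e > 0"
  shows "\<exists>d>0. \<forall>y y'. norm (y - x) < d \<longrightarrow> norm (y' - x) < d \<longrightarrow>
    norm (g y' - g y - (wirt_z g x * (y' - y) + wirt_zb g x * cnj (y' - y)))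
      \<le> e * (norm (y - x) + norm (y' - x))"
proof -
  define E where "E y = g y - g x - (wirt_z g x * (y - x) + wirt_zb g x * cnj (y - x))" for y
  obtain d where d: "d > 0" "\<And>y. norm (y - x) < d \<Longrightarrow> norm (E y) \<le> e * norm (y - x)"
    using wirt_linearization_estimate[OF assms] unfolding E_def by blast
  have "norm (g y' - g y - (wirt_z g x * (y' - y) + wirt_zb g x * cnj (y' - y)))
      \<le> e * (norm (y - x) + norm (y' - x))" if "norm (y - x) < d" "norm (y' - x) < d" for y y'
  proof -
    have "norm (g y' - g y - (wirt_z g x * (y' - y) + wirt_zb g x * cnj (y' - y))) = norm (E y' - E y)"
      by (simp add: E_def algebra_simps)
    also have "\<dots> \<le> norm (E y') + norm (E y)" by (rule norm_triangle_ineq4)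
    also have "\<dots> \<le> e * norm (y' - x) + e * norm (y - x)"
      using d(2)[OF that(1)] d(2)[OF that(2)] by linarith
    finally show ?thesis by (simp add: algebra_simps)
  qed
  with d(1) show ?thesis by blast
qed

lemma has_derivative_wirt_difference:
  assumes "f differentiable (at (y + c))" "f differentiable (at y)"
  shows "((\<lambda>y. f (y + c) - f y - (A * y + B * cnj y)) has_derivative
    (\<lambda>u. (wirt_z f (y + c) - wirt_z f y - A) * u + (wirt_zb f (y + c) - wirt_zb f y - B) * cnj u))
    (at y)"
proof -
  have "((\<lambda>y. y + c) has_derivative (\<lambda>u. u)) (at y)" by (auto intro!: derivative_eq_intros)
  from has_derivative_compose[OF this has_derivative_wirt[OF assms(1)]]
  have "((\<lambda>y. f (y + c)) has_derivative
      (\<lambda>u. wirt_z f (y + c) * u + wirt_zb f (y + c) * cnj u)) (at y)" by simp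
  moreover note has_derivative_wirt[OF assms(2)]
  moreover have "((\<lambda>y. A * y + B * cnj y) has_derivative (\<lambda>u. A * u + B * cnj u)) (at y)"
    by (auto intro!: derivative_eq_intros)
  ultimately have "((\<lambda>y. f (y + c) - f y - (A * y + B * cnj y)) has_derivative
      (\<lambda>u. (wirt_z f (y + c) * u + wirt_zb f (y + c) * cnj u) - (wirt_z f y * u + wirt_zb f y * cnj u)
        - (A * u + B * cnj u))) (at y)"
    by (intro has_derivative_diff)
  then show ?thesis by (rule has_derivative_eq_rhs) (simp add: fun_eq_iff algebra_simps)
qed

text \<open>The second difference of \<open>f\<close> in the directions \<open>v\<close>, \<open>w\<close> is the increment in
  direction \<open>v\<close> of the first difference \<open>\<psi>\<close> in direction \<open>w\<close>, estimated by the mean value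
  inequality.\<close>

lemma wirt_second_difference:
  assumes X: "open X" "x \<in> X" and df: "\<forall>y\<in>X. f differentiable (at y)"
    and dP: "wirt_z f differentiable (at x)" and dQ: "wirt_zb f differentiable (at x)"
    and v: "norm v = 1" and w: "norm w = 1" and e: "e > 0"
  shows "\<exists>d>0. \<forall>s. 0 < s \<and> s < d \<longrightarrow>
    norm (f (x + of_real s * v + of_real s * w) - f (x + of_real s * v) - f (x + of_real s * w) + f x
      - (of_real s)\<^sup>2 * ((wirt_z (wirt_z f) x * w + wirt_zb (wirt_z f) x * cnj w) * v
         + (wirt_z (wirt_zb f) x * w + wirt_zb (wirt_zb f) x * cnj w) * cnj v)) \<le> 6 * e * s\<^sup>2"
proof -
  define P Q where "P = wirt_z f" and "Q = wirt_zb f"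
  define L where "L g u = wirt_z g x * u + wirt_zb g x * cnj u" for g u
  obtain d1 where d1: "d1 > 0" "\<And>y y'. norm (y - x) < d1 \<Longrightarrow> norm (y' - x) < d1 \<Longrightarrow>
      norm (P y' - P y - L P (y' - y)) \<le> e * (norm (y - x) + norm (y' - x))"
    using wirt_increment_estimate[OF dP e] unfolding P_def L_def by blast
  obtain d2 where d2: "d2 > 0" "\<And>y y'. norm (y - x) < d2 \<Longrightarrow> norm (y' - x) < d2 \<Longrightarrow>
      norm (Q y' - Q y - L Q (y' - y)) \<le> e * (norm (y - x) + norm (y' - x))"
    using wirt_increment_estimate[OF dQ e] unfolding Q_def L_def by blast
  obtain r where r: "r > 0" "ball x r \<subseteq> X" using X open_contains_ball by blast
  define d where "d = min (min d1 d2) r / 3"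
  have "norm (f (x + of_real s * v + of_real s * w) - f (x + of_real s * v) - f (x + of_real s * w) + f x
      - (of_real s)\<^sup>2 * (L P w * v + L Q w * cnj v)) \<le> 6 * e * s\<^sup>2" if s: "0 < s" "s < d" for s
  proof -
    define \<sigma> where "\<sigma> = (of_real s :: complex)"
    have cs: "cnj \<sigma> = \<sigma>" and ns: "norm \<sigma> = s" using s by (simp_all add: \<sigma>_def)
    define \<psi> where "\<psi> y = f (y + \<sigma> * w) - f y - (\<sigma> * L P w * y + \<sigma> * L Q w * cnj y)" for y
    define \<alpha> where "\<alpha> y = P (y + \<sigma> * w) - P y - \<sigma> * L P w" for y
    define \<beta> where "\<beta> y = Q (y + \<sigma> * w) - Q y - \<sigma> * L Q w" for y
    define Seg where "Seg = closed_segment x (x + \<sigma> * v)"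
    have near: "norm (y - x) \<le> s" "norm (y + \<sigma> * w - x) \<le> 2 * s" if "y \<in> Seg" for y
    proof -
      show "norm (y - x) \<le> s"
        using segment_bound(1)[OF that[unfolded Seg_def]] by (simp add: norm_mult ns v)
      then show "norm (y + \<sigma> * w - x) \<le> 2 * s"
        using norm_triangle_ineq[of "y - x" "\<sigma> * w"] by (simp add: norm_mult ns w algebra_simps)
    qed
    have sd: "3 * s < d1" "3 * s < d2" "3 * s < r" using s by (auto simp: d_def)
    have "(\<psi> has_derivative (\<lambda>u. \<alpha> y * u + \<beta> y * cnj u)) (at y)" if y: "y \<in> Seg" for y
    proof -
      have "y + \<sigma> * w \<in> X" "y \<in> X"
        using near[OF y] sd s r(2) by (auto simp: dist_norm norm_minus_commute)
      then show ?thesis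
        using has_derivative_wirt_difference[of f y "\<sigma> * w" "\<sigma> * L P w" "\<sigma> * L Q w"] df
        unfolding \<psi>_def[abs_def] \<alpha>_def \<beta>_def P_def Q_def by simp
    qed
    moreover have "norm (\<alpha> y) + norm (\<beta> y) \<le> 6 * e * s" if y: "y \<in> Seg" for y
    proof -
      have "\<sigma> * L g w = L g (y + \<sigma> * w - y)" for g
        unfolding L_def using cs by (simp add: algebra_simps)
      then have "\<alpha> y = P (y + \<sigma> * w) - P y - L P (y + \<sigma> * w - y)"
        "\<beta> y = Q (y + \<sigma> * w) - Q y - L Q (y + \<sigma> * w - y)"
        by (simp_all add: \<alpha>_def \<beta>_def)
      moreover have "norm (y - x) < d1" "norm (y + \<sigma> * w - x) < d1"
        "norm (y - x) < d2" "norm (y + \<sigma> * w - x) < d2"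
        using near[OF y] sd s by auto
      moreover have "e * (norm (y - x) + norm (y + \<sigma> * w - x)) \<le> e * (s + 2 * s)"
        using near[OF y] e by (intro mult_left_mono) auto
      ultimately have "norm (\<alpha> y) \<le> e * (s + 2 * s)" "norm (\<beta> y) \<le> e * (s + 2 * s)"
        using d1(2) d2(2) by (metis order_trans)+
      then show ?thesis by (simp add: algebra_simps)
    qed
    ultimately have "norm (\<psi> (x + \<sigma> * v) - \<psi> x) \<le> 6 * e * s * norm (x + \<sigma> * v - x)"
      by (intro wirt_mean_value_bound[of Seg]) (auto simp: Seg_def)
    moreover have "\<psi> (x + \<sigma> * v) - \<psi> x = f (x + \<sigma> * v + \<sigma> * w) - f (x + \<sigma> * v) - f (x + \<sigma> * w) + f x
        - \<sigma>\<^sup>2 * (L P w * v + L Q w * cnj v)"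
      unfolding \<psi>_def using cs by (simp add: algebra_simps power2_eq_square)
    ultimately show ?thesis using s(1) by (simp add: \<sigma>_def norm_mult v power2_eq_square)
  qed
  moreover have "d > 0" using d1 d2 r by (simp add: d_def)
  ultimately show ?thesis unfolding L_def P_def Q_def by blast
qed

lemma wirt_mixed_commute:
  assumes "open X" "x \<in> X" "\<forall>y\<in>X. f differentiable (at y)"
    and "wirt_z f differentiable (at x)" "wirt_zb f differentiable (at x)"
  shows "wirt_zb (wirt_z f) x = wirt_z (wirt_zb f) x"
proof -
  define A where "A w v = (wirt_z (wirt_z f) x * w + wirt_zb (wirt_z f) x * cnj w) * v
      + (wirt_z (wirt_zb f) x * w + wirt_zb (wirt_zb f) x * cnj w) * cnj v" for w v
  define D where "D s v w = f (x + of_real s * v + of_real s * w) - f (x + of_real s * v)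
      - f (x + of_real s * w) + f x" for s v w
  have "norm (A \<i> 1 - A 1 \<i>) \<le> 0 + e" if e: "e > 0" for e
  proof -
    have e': "e / 12 > 0" using e by simp
    obtain d1 where d1: "d1 > 0" "\<And>s. 0 < s \<and> s < d1 \<Longrightarrow>
        norm (D s 1 \<i> - (of_real s)\<^sup>2 * A \<i> 1) \<le> 6 * (e / 12) * s\<^sup>2"
      using wirt_second_difference[OF assms _ _ e', of 1 \<i>] unfolding A_def D_def by auto
    obtain d2 where d2: "d2 > 0" "\<And>s. 0 < s \<and> s < d2 \<Longrightarrow>
        norm (D s \<i> 1 - (of_real s)\<^sup>2 * A 1 \<i>) \<le> 6 * (e / 12) * s\<^sup>2"
      using wirt_second_difference[OF assms _ _ e', of \<i> 1] unfolding A_def D_def by auto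
    define s where "s = min d1 d2 / 2"
    have s: "0 < s" "s < d1" "s < d2" using d1 d2 by (auto simp: s_def)
    have "D s 1 \<i> = D s \<i> 1" by (simp add: D_def algebra_simps)
    then have "(of_real s)\<^sup>2 * (A \<i> 1 - A 1 \<i>)
        = (D s \<i> 1 - (of_real s)\<^sup>2 * A 1 \<i>) - (D s 1 \<i> - (of_real s)\<^sup>2 * A \<i> 1)"
      by (simp add: algebra_simps)
    then have "norm ((of_real s)\<^sup>2 * (A \<i> 1 - A 1 \<i>))
        \<le> norm (D s \<i> 1 - (of_real s)\<^sup>2 * A 1 \<i>) + norm (D s 1 \<i> - (of_real s)\<^sup>2 * A \<i> 1)"
      by (metis norm_triangle_ineq4)
    also have "\<dots> \<le> e * s\<^sup>2" using d1(2)[of s] d2(2)[of s] s by simp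
    finally have "s\<^sup>2 * norm (A \<i> 1 - A 1 \<i>) \<le> s\<^sup>2 * e"
      by (simp add: norm_mult norm_power mult.commute)
    then show ?thesis using s by simp
  qed
  then have "A \<i> 1 = A 1 \<i>" using field_le_epsilon[of "norm (A \<i> 1 - A 1 \<i>)" 0] by simp
  then show ?thesis unfolding A_def by (simp add: algebra_simps)
qed

lemma wirt_taylor2_at0:
  assumes "open X" "0 \<in> X" "\<forall>y\<in>X. f differentiable (at y)"
    and dP: "wirt_z f differentiable (at 0)" and dQ: "wirt_zb f differentiable (at 0)" and "e > 0"
  shows "\<exists>d>0. \<forall>z. norm z < d \<longrightarrow> norm (f z - (f 0 + wirt_z f 0 * z + wirt_zb f 0 * cnj z
      + (wirt_z (wirt_z f) 0 * (z * z) + 2 * wirt_zb (wirt_z f) 0 * (z * cnj z)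
         + wirt_zb (wirt_zb f) 0 * (cnj z * cnj z)) / 2)) \<le> e * (norm z)\<^sup>2"
proof -
  define P Q where "P = wirt_z f" and "Q = wirt_zb f"
  define a m b where "a = wirt_z P 0" and "m = wirt_zb P 0" and "b = wirt_zb Q 0"
  have mQ: "wirt_z Q 0 = m" \<comment> \<open>so that \<open>T\<close> matches the linearizations of both \<open>P\<close> and \<open>Q\<close>\<close>
    using wirt_mixed_commute[OF assms(1-5)] by (simp add: m_def P_def Q_def)
  define \<alpha> where "\<alpha> y = P y - P 0 - (a * y + m * cnj y)" for y
  define \<beta> where "\<beta> y = Q y - Q 0 - (m * y + b * cnj y)" for y
  have e2: "e / 2 > 0" using \<open>e > 0\<close> by simp
  obtain d1 where d1: "d1 > 0" "\<And>y. norm y < d1 \<Longrightarrow> norm (\<alpha> y) \<le> e / 2 * norm y"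
    using wirt_linearization_estimate[OF dP e2] unfolding \<alpha>_def P_def a_def m_def by fastforce
  obtain d2 where d2: "d2 > 0" "\<And>y. norm y < d2 \<Longrightarrow> norm (\<beta> y) \<le> e / 2 * norm y"
    using wirt_linearization_estimate[OF dQ e2] unfolding \<beta>_def mQ[symmetric] b_def Q_def by fastforce
  obtain r where r: "r > 0" "ball 0 r \<subseteq> X" using assms(1,2) open_contains_ball by blast
  define T where "T y = f 0 + P 0 * y + Q 0 * cnj y
    + (a * (y * y) + 2 * m * (y * cnj y) + b * (cnj y * cnj y)) / 2" for y
  define d where "d = min r (min d1 d2)"
  have "norm (f z - T z) \<le> e * (norm z)\<^sup>2" if z: "norm z < d" for z
  proof -
    have "((\<lambda>y. f y - T y) has_derivative (\<lambda>u. \<alpha> y * u + \<beta> y * cnj u)) (at y)"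
      if "y \<in> cball 0 (norm z)" for y
    proof -
      have "y \<in> X" using that z r(2) by (auto simp: d_def)
      then have "(f has_derivative (\<lambda>u. P y * u + Q y * cnj u)) (at y)"
        using has_derivative_wirt[of f y] assms(3) by (simp add: P_def Q_def)
      moreover have "(T has_derivative (\<lambda>u. P 0 * u + Q 0 * cnj u + (a * (u * y + y * u)
          + 2 * m * (u * cnj y + y * cnj u) + b * (cnj u * cnj y + cnj y * cnj u)) / 2)) (at y)"
        unfolding T_def[abs_def] by (auto intro!: derivative_eq_intros)
      ultimately show ?thesis
        by (rule has_derivative_eq_rhs[OF has_derivative_diff])
          (simp add: \<alpha>_def \<beta>_def fun_eq_iff field_simps)
    qed
    moreover have "norm (\<alpha> y) + norm (\<beta> y) \<le> e * norm z" if "y \<in> cball 0 (norm z)" for y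
    proof -
      have y: "norm y \<le> norm z" "norm y < d1" "norm y < d2" using that z by (auto simp: d_def)
      have "e / 2 * norm y \<le> e / 2 * norm z" using y(1) e2 by (intro mult_left_mono) auto
      then show ?thesis using d1(2)[OF y(2)] d2(2)[OF y(3)] by linarith
    qed
    ultimately have "norm ((f z - T z) - (f 0 - T 0)) \<le> e * norm z * norm (z - 0)"
      by (intro wirt_mean_value_bound[of "cball 0 (norm z)"]) auto
    then show ?thesis by (simp add: T_def power2_eq_square mult.assoc)
  qed
  moreover have "d > 0" using r d1 d2 by (simp add: d_def)
  ultimately show ?thesis unfolding T_def P_def Q_def a_def m_def b_def by blast
qed

lemma zero_if_norm_le_at_right:
  fixes c :: complex and f :: "real \<Rightarrow> complex" and g :: "real \<Rightarrow> real"
  assumes "d > 0" "\<And>t. 0 < t \<Longrightarrow> t < d \<Longrightarrow> norm (c + f t) \<le> g t"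
    and "(f \<longlongrightarrow> 0) (at_right 0)" "(g \<longlongrightarrow> 0) (at_right 0)"
  shows "c = 0"
proof -
  have "eventually (\<lambda>t. norm (c + f t) \<le> g t) (at_right 0)"
    using eventually_at_right_real[OF assms(1)] by eventually_elim (use assms(2) in auto)
  then have "((\<lambda>t. c + f t) \<longlongrightarrow> 0) (at_right 0)"
    by (rule Lim_null_comparison[OF _ assms(4)])
  moreover have "((\<lambda>t. c + f t) \<longlongrightarrow> c + 0) (at_right 0)"
    by (intro tendsto_intros assms(3))
  ultimately show "c = 0" using tendsto_unique[OF trivial_limit_at_right_real] by fastforce
qed

lemma real_quadratic_small_o_zero:
  fixes a b c :: complex
  assumes H: "\<And>e. e > 0 \<Longrightarrow> \<exists>d>0. \<forall>t. 0 < t \<and> t < d \<longrightarrow>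
      norm (a + b * of_real t + c * (of_real t)\<^sup>2) \<le> e * t\<^sup>2"
  shows "a = 0 \<and> b = 0 \<and> c = 0"
proof -
  obtain d where d: "d > 0" "\<And>t. 0 < t \<and> t < d \<Longrightarrow> norm (a + b * of_real t + c * (of_real t)\<^sup>2) \<le> t\<^sup>2"
    using H[of 1] by auto
  have a: "a = 0"
    by (rule zero_if_norm_le_at_right[OF d(1), of _ "\<lambda>t. b * of_real t + c * (of_real t)\<^sup>2"
          "\<lambda>t. t\<^sup>2"]) (use d(2) in \<open>auto simp: add.assoc intro!: tendsto_eq_intros\<close>)
  have b: "b = 0"
  proof (rule zero_if_norm_le_at_right[OF d(1), of _ "\<lambda>t. c * of_real t" "\<lambda>t. t"])
    fix t :: real assume t: "0 < t" "t < d"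
    have "a + b * of_real t + c * (of_real t)\<^sup>2 = of_real t * (b + c * of_real t)"
      using a by (simp add: algebra_simps power2_eq_square)
    then have "t * norm (b + c * of_real t) = norm (a + b * of_real t + c * (of_real t)\<^sup>2)"
      using t by (simp add: norm_mult)
    then have "t * norm (b + c * of_real t) \<le> t * t" using d(2)[of t] t by (simp add: power2_eq_square)
    then show "norm (b + c * of_real t) \<le> t" using t by (simp add: mult_le_cancel_left_pos)
  qed (auto intro!: tendsto_eq_intros)
  have "norm c \<le> 0 + e" if e: "e > 0" for e
  proof -
    obtain d' where d': "d' > 0" "\<And>t. 0 < t \<and> t < d' \<Longrightarrow>
        norm (a + b * of_real t + c * (of_real t)\<^sup>2) \<le> e * t\<^sup>2"
      using H[OF e] by auto
    have "norm c * (d' / 2)\<^sup>2 \<le> e * (d' / 2)\<^sup>2"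
      using d'(2)[of "d' / 2"] d'(1) a b by (simp add: norm_mult norm_power)
    then show ?thesis using d'(1) by simp
  qed
  then have "c = 0" using field_le_epsilon[of "norm c" 0] by simp
  with a b show ?thesis by simp
qed

lemma wirt_quadratic_small_o_zero:
  fixes A B C D E G :: complex
  assumes H: "\<And>e. e > 0 \<Longrightarrow> \<exists>d>0. \<forall>z. norm z < d \<longrightarrow>
     norm (A + B * cnj z + C * z + D * (z * z) + E * (cnj z * cnj z) + G * (z * cnj z)) \<le> e * (norm z)\<^sup>2"
  shows "A = 0 \<and> B = 0 \<and> C = 0 \<and> D = 0 \<and> E = 0 \<and> G = 0"
proof -
  have ray: "A = 0 \<and> B * cnj v + C * v = 0 \<and> D * (v * v) + E * (cnj v * cnj v) + G * (v * cnj v) = 0"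
    if v: "v \<noteq> 0" for v
  proof (rule real_quadratic_small_o_zero)
    fix e :: real assume e: "e > 0"
    have nv: "norm v > 0" using v by simp
    obtain d where d: "d > 0" "\<And>z. norm z < d \<Longrightarrow>
      norm (A + B * cnj z + C * z + D * (z * z) + E * (cnj z * cnj z) + G * (z * cnj z))
        \<le> e / (norm v)\<^sup>2 * (norm z)\<^sup>2"
      using H[of "e / (norm v)\<^sup>2"] e nv by auto
    show "\<exists>d>0. \<forall>t. 0 < t \<and> t < d \<longrightarrow> norm (A + (B * cnj v + C * v) * of_real t
        + (D * (v * v) + E * (cnj v * cnj v) + G * (v * cnj v)) * (of_real t)\<^sup>2) \<le> e * t\<^sup>2"
    proof (intro exI[of _ "d / norm v"] conjI allI impI)
      show "d / norm v > 0" using d nv by simp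
      fix t :: real assume t: "0 < t \<and> t < d / norm v"
      have "norm (of_real t * v) < d" using t nv by (simp add: norm_mult field_simps)
      from d(2)[OF this] show "norm (A + (B * cnj v + C * v) * of_real t
        + (D * (v * v) + E * (cnj v * cnj v) + G * (v * cnj v)) * (of_real t)\<^sup>2) \<le> e * t\<^sup>2"
        using nv t by (simp add: norm_mult field_simps power2_eq_square)
    qed
  qed
  have r1: "A = 0" "B + C = 0" "D + E + G = 0" using ray[of 1] by auto
  have r2: "C = B" "G = D + E" using ray[of \<i>] by (auto simp: algebra_simps)
  have "1 + \<i> \<noteq> 0" by (simp add: complex_eq_iff)
  from ray[OF this] have r3: "\<i> * (D * 2) + G * 2 = \<i> * (E * 2)" by (simp add: algebra_simps)
  have "2 * (D + E) = 0" using r1(3) r2(2) by (simp add: algebra_simps)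
  then have "G = 0" using r2(2) by (metis mult_eq_0_iff zero_neq_numeral)
  moreover from r3 this have "D = E" by simp
  ultimately have "D = 0" "E = 0" "G = 0" using r1(3) by simp_all
  with r1 r2 show ?thesis by simp
qed

lemma wirt_taylor_coefficients_at0:
  assumes "open X" "0 \<in> X" "Ck_on 2 X F" "\<delta> > 0"
    and "\<And>z. norm z < \<delta> \<Longrightarrow> norm (F z - (c0 + c1 * cnj z + c2 * z + c3 * z\<^sup>2
        + c4 * (cnj z)\<^sup>2 + c5 * z * cnj z)) \<le> C * norm z ^ 3"
  shows "c0 = F 0 \<and> c1 = wirt_zb F 0 \<and> c2 = wirt_z F 0 \<and> c3 = wirt_z (wirt_z F) 0 / 2
    \<and> c4 = wirt_zb (wirt_zb F) 0 / 2 \<and> c5 = wirt_zb (wirt_z F) 0"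
proof -
  define T where "T z = F 0 + wirt_z F 0 * z + wirt_zb F 0 * cnj z + (wirt_z (wirt_z F) 0 * (z * z)
      + 2 * wirt_zb (wirt_z F) 0 * (z * cnj z) + wirt_zb (wirt_zb F) 0 * (cnj z * cnj z)) / 2" for z
  define Pe where "Pe z = c0 + c1 * cnj z + c2 * z + c3 * z\<^sup>2 + c4 * (cnj z)\<^sup>2 + c5 * z * cnj z" for z
  have diff: "\<forall>y\<in>X. F differentiable (at y)" "wirt_z F differentiable (at 0)"
    "wirt_zb F differentiable (at 0)"
    using assms(2,3) by (simp_all add: numeral_2_eq_2)
  have "(F 0 - c0) = 0 \<and> (wirt_zb F 0 - c1) = 0 \<and> (wirt_z F 0 - c2) = 0
    \<and> (wirt_z (wirt_z F) 0 / 2 - c3) = 0 \<and> (wirt_zb (wirt_zb F) 0 / 2 - c4) = 0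
    \<and> (wirt_zb (wirt_z F) 0 - c5) = 0"
  proof (rule wirt_quadratic_small_o_zero)
    fix e :: real assume e: "e > 0"
    then obtain d1 where d1: "d1 > 0" "\<And>z. norm z < d1 \<Longrightarrow> norm (F z - T z) \<le> e / 2 * (norm z)\<^sup>2"
      using wirt_taylor2_at0[OF assms(1,2) diff, of "e / 2"] unfolding T_def by auto
    define d where "d = min d1 (min \<delta> (e / (2 * (\<bar>C\<bar> + 1))))"
    have "norm (T z - Pe z) \<le> e * (norm z)\<^sup>2" if z: "norm z < d" for z
    proof -
      have "C * norm z \<le> (\<bar>C\<bar> + 1) * (e / (2 * (\<bar>C\<bar> + 1)))"
        using z by (intro mult_mono) (auto simp: d_def)
      also have "\<dots> = e / 2" by (simp add: field_simps)
      finally have "C * norm z * (norm z)\<^sup>2 \<le> e / 2 * (norm z)\<^sup>2"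
        by (rule mult_right_mono) simp
      then have "C * norm z ^ 3 \<le> e / 2 * (norm z)\<^sup>2"
        by (simp add: power3_eq_cube power2_eq_square mult.assoc)
      moreover have "norm (T z - Pe z) \<le> norm (F z - Pe z) + norm (F z - T z)"
        using norm_triangle_ineq4[of "F z - Pe z" "F z - T z"] by simp
      ultimately show ?thesis
        using d1(2)[of z] assms(5)[of z] z unfolding Pe_def d_def by auto
    qed
    moreover have "T z - Pe z = (F 0 - c0) + (wirt_zb F 0 - c1) * cnj z + (wirt_z F 0 - c2) * z
       + (wirt_z (wirt_z F) 0 / 2 - c3) * (z * z) + (wirt_zb (wirt_zb F) 0 / 2 - c4) * (cnj z * cnj z)
       + (wirt_zb (wirt_z F) 0 - c5) * (z * cnj z)" for z
      unfolding T_def Pe_def by (simp add: algebra_simps power2_eq_square add_divide_distrib)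
    moreover have "d > 0" using d1 e assms(4) by (simp add: d_def)
    ultimately show "\<exists>d>0. \<forall>z. norm z < d \<longrightarrow> norm ((F 0 - c0) + (wirt_zb F 0 - c1) * cnj z
       + (wirt_z F 0 - c2) * z + (wirt_z (wirt_z F) 0 / 2 - c3) * (z * z)
       + (wirt_zb (wirt_zb F) 0 / 2 - c4) * (cnj z * cnj z) + (wirt_zb (wirt_z F) 0 - c5) * (z * cnj z))
       \<le> e * (norm z)\<^sup>2" by (intro exI[of _ d]) auto
  qed
  then show ?thesis by simp
qed

text \<open>h_z/h is the Christoffel symbol of the metric h dz dzbar; in these terms the flow reads
  i u_t + u_xx = minus_christoffel h u * u_x^2.\<close>

definition minus_christoffel :: "(complex \<Rightarrow> real) \<Rightarrow> complex \<Rightarrow> complex" where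
  "minus_christoffel h z = - wirt_z (\<lambda>z. complex_of_real (h z)) z / complex_of_real (h z)"

lemma has_derivative_ln_metric:
  fixes h :: "complex \<Rightarrow> real"
  assumes hp: "h z > 0" and dH: "(\<lambda>x. complex_of_real (h x)) differentiable (at z)"
  shows "((\<lambda>x. complex_of_real (ln (h x))) has_derivative
    (\<lambda>v. - minus_christoffel h z * v - cnj (minus_christoffel h z) * cnj v)) (at z)"
proof -
  define H where "H = (\<lambda>x. complex_of_real (h x))"
  define a where "a = wirt_z H z"
  have "wirt_zb H z = cnj a"
    unfolding a_def H_def by (rule wirt_zb_real_valued[OF open_UNIV UNIV_I _ dH]) simp
  then have "(H has_derivative (\<lambda>v. a * v + cnj a * cnj v)) (at z)"
    using has_derivative_wirt[OF dH[folded H_def]] a_def by simp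
  from has_derivative_Re[OF this]
  have "(h has_derivative (\<lambda>v. Re (a * v + cnj a * cnj v))) (at z)" by (simp add: H_def)
  from has_derivative_compose[OF this DERIV_ln[OF hp, unfolded has_field_derivative_def]]
  have "((\<lambda>x. ln (h x)) has_derivative (\<lambda>v. inverse (h z) * Re (a * v + cnj a * cnj v))) (at z)"
    by (simp add: mult.commute)
  then have "((\<lambda>x. complex_of_real (ln (h x))) has_derivative
      (\<lambda>v. complex_of_real (inverse (h z) * Re (a * v + cnj a * cnj v)))) (at z)"
    by (rule has_derivative_of_real)
  moreover have "(\<lambda>v. complex_of_real (inverse (h z) * Re (a * v + cnj a * cnj v)))
      = (\<lambda>v. - minus_christoffel h z * v - cnj (minus_christoffel h z) * cnj v)"
  proof
    fix v
    have Hz: "complex_of_real (h z) \<noteq> 0" using hp by simp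
    have "complex_of_real (Re (a * v + cnj a * cnj v)) = a * v + cnj a * cnj v"
      by (simp add: complex_eq_iff)
    then have "complex_of_real (inverse (h z) * Re (a * v + cnj a * cnj v))
        = (a * v + cnj a * cnj v) / complex_of_real (h z)"
      by (simp add: divide_inverse mult.commute)
    also have "\<dots> = - minus_christoffel h z * v - cnj (minus_christoffel h z) * cnj v"
      using Hz by (simp add: minus_christoffel_def a_def H_def field_simps)
    finally show "complex_of_real (inverse (h z) * Re (a * v + cnj a * cnj v))
        = - minus_christoffel h z * v - cnj (minus_christoffel h z) * cnj v" .
  qed
  ultimately show ?thesis by (rule has_derivative_eq_rhs)
qed

context
  fixes h :: "complex \<Rightarrow> real" and S :: "complex set"
  assumes S_open: "open S" and h_pos: "\<forall>z\<in>S. h z > 0"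
    and h_C3: "Ck_on 3 S (\<lambda>z. complex_of_real (h z))"
begin

lemma Ck_on_minus_christoffel: "Ck_on 2 S (minus_christoffel h)"
proof -
  define H where "H = (\<lambda>z. complex_of_real (h z))"
  have "Ck_on 2 S (wirt_z H)" "Ck_on 2 S H" "\<forall>z\<in>S. H z \<noteq> 0"
    using h_C3 Ck_on_mono[of 2 S H] h_pos by (auto simp: H_def numeral_3_eq_3 numeral_2_eq_2)
  then have "Ck_on 2 S (\<lambda>z. - (wirt_z H z * inverse (H z)))"
    by (intro Ck_on_uminus Ck_on_mult Ck_on_inverse S_open)
  then show ?thesis
    by (rule Ck_on_cong[OF S_open]) (simp add: minus_christoffel_def H_def divide_inverse)
qed

lemma wirt_ln_metric:
  assumes "y \<in> S"
  shows "(\<lambda>z. complex_of_real (ln (h z))) differentiable (at y)"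
    and "wirt_z (\<lambda>z. complex_of_real (ln (h z))) y = - minus_christoffel h y"
    and "wirt_zb (\<lambda>z. complex_of_real (ln (h z))) y = - cnj (minus_christoffel h y)"
proof -
  have "(\<lambda>z. complex_of_real (h z)) differentiable (at y)"
    using h_C3 assms by (simp add: numeral_3_eq_3)
  note d = has_derivative_ln_metric[OF h_pos[rule_format, OF assms] this]
  show "(\<lambda>z. complex_of_real (ln (h z))) differentiable (at y)"
    using d unfolding differentiable_def by blast
  show "wirt_z (\<lambda>z. complex_of_real (ln (h z))) y = - minus_christoffel h y"
    "wirt_zb (\<lambda>z. complex_of_real (ln (h z))) y = - cnj (minus_christoffel h y)"
    using wirt_from_has_derivative[OF d, of "- minus_christoffel h y" "- cnj (minus_christoffel h y)"]
    by simp_all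
qed

lemma wirt_zb_wirt_z_ln_metric:
  assumes "y \<in> S"
  shows "wirt_zb (wirt_z (\<lambda>z. complex_of_real (ln (h z)))) y = - wirt_zb (minus_christoffel h) y"
proof -
  have "minus_christoffel h differentiable (at y)"
    using Ck_on_minus_christoffel assms by (simp add: numeral_2_eq_2)
  then show ?thesis
    using wirt_cong_open(2)[OF S_open assms wirt_ln_metric(2)] wirt_uminus(2) by simp
qed

lemma wirt_zb_minus_christoffel_real:
  assumes "y \<in> S"
  shows "cnj (wirt_zb (minus_christoffel h) y) = wirt_zb (minus_christoffel h) y"
proof -
  define L where "L = (\<lambda>z. complex_of_real (ln (h z)))"
  define F where "F = minus_christoffel h"
  have dF: "F differentiable (at y)" using Ck_on_minus_christoffel assms by (simp add: F_def numeral_2_eq_2)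
  then have dcF: "(\<lambda>x. cnj (F x)) differentiable (at y)"
    unfolding differentiable_def using has_derivative_cnj by blast
  have "wirt_z L differentiable (at y)"
    by (rule differentiable_cong_open[OF S_open assms, of "\<lambda>x. - F x"])
      (use wirt_ln_metric(2) dF in \<open>auto simp: L_def F_def\<close>)
  moreover have "wirt_zb L differentiable (at y)"
    by (rule differentiable_cong_open[OF S_open assms, of "\<lambda>x. - cnj (F x)"])
      (use wirt_ln_metric(3) dcF in \<open>auto simp: L_def F_def\<close>)
  ultimately have "wirt_zb (wirt_z L) y = wirt_z (wirt_zb L) y"
    by (intro wirt_mixed_commute[OF S_open assms]) (use wirt_ln_metric(1) in \<open>auto simp: L_def\<close>)
  also have "\<dots> = wirt_z (\<lambda>x. - cnj (F x)) y"
    by (rule wirt_cong_open(1)[OF S_open assms]) (simp add: wirt_ln_metric(3) L_def F_def)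
  also have "\<dots> = - cnj (wirt_zb F y)"
    using wirt_uminus(1)[OF dcF] wirt_cnj(1)[OF dF] by simp
  finally show ?thesis using wirt_zb_wirt_z_ln_metric[OF assms] by (simp add: L_def F_def)
qed

lemma intrinsic_vanishing_at0_iff:
  assumes "0 \<in> S"
  shows "intrinsic_vanishing_at0 h \<longleftrightarrow> minus_christoffel h 0 * wirt_zb (minus_christoffel h) 0
    + wirt_z (wirt_zb (minus_christoffel h)) 0 = 0"
proof -
  have "wirt_zb (minus_christoffel h) differentiable (at 0)"
    using Ck_on_minus_christoffel assms by (simp add: numeral_2_eq_2)
  then have "wirt_z (wirt_zb (wirt_z (\<lambda>z. complex_of_real (ln (h z))))) 0
      = - wirt_z (wirt_zb (minus_christoffel h)) 0"
    using wirt_cong_open(1)[OF S_open assms wirt_zb_wirt_z_ln_metric] wirt_uminus(1) by simp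
  then show ?thesis
    unfolding intrinsic_vanishing_at0_def Let_def
    using wirt_ln_metric(2)[OF assms] wirt_zb_wirt_z_ln_metric[OF assms] by simp
qed

end

lemma intrinsic_vanishing_coefficients:
  fixes h :: "complex \<Rightarrow> real" and c0 c1 c2 c3 c4 c5 :: complex
  assumes "open S" "0 \<in> S" "\<forall>z\<in>S. h z > 0" "smooth_on S (\<lambda>z. complex_of_real (h z))"
    and "intrinsic_vanishing_at0 h" and "\<delta> > 0"
    and "\<And>z. norm z < \<delta> \<Longrightarrow> norm (minus_christoffel h z - (c0 + c1 * cnj z + c2 * z + c3 * z\<^sup>2
        + c4 * (cnj z)\<^sup>2 + c5 * z * cnj z)) \<le> C * norm z ^ 3"
  shows "c5 = - c0 * c1" and "c4 = - c1 * cnj c0 / 2"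
proof -
  define F where "F = minus_christoffel h"
  have C3: "Ck_on 3 S (\<lambda>z. complex_of_real (h z))" using assms(4) unfolding smooth_on_def by blast
  have C2: "Ck_on 2 S F" using Ck_on_minus_christoffel[OF assms(1,3) C3] by (simp add: F_def)
  then have d: "\<forall>y\<in>S. F differentiable (at y)" "wirt_z F differentiable (at 0)"
    "wirt_zb F differentiable (at 0)" "\<forall>y\<in>S. wirt_zb F differentiable (at y)"
    using assms(2) by (simp_all add: numeral_2_eq_2)
  have coef: "c0 = F 0" "c1 = wirt_zb F 0" "c4 = wirt_zb (wirt_zb F) 0 / 2" "c5 = wirt_zb (wirt_z F) 0"
    using wirt_taylor_coefficients_at0[OF assms(1,2) C2 assms(6), of c0 c1 c2 c3 c4 c5 C] assms(7)
    by (simp_all add: F_def)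
  have "wirt_zb (wirt_z F) 0 = wirt_z (wirt_zb F) 0"
    by (rule wirt_mixed_commute[OF assms(1,2) d(1-3)])
  moreover have "F 0 * wirt_zb F 0 + wirt_z (wirt_zb F) 0 = 0"
    using intrinsic_vanishing_at0_iff[OF assms(1,3) C3 assms(2)] assms(5) by (simp add: F_def)
  then have "wirt_z (wirt_zb F) 0 = - (F 0 * wirt_zb F 0)"
    by (simp add: eq_neg_iff_add_eq_0 add.commute)
  ultimately show c5: "c5 = - c0 * c1" using coef by simp
  have real: "cnj (wirt_zb F y) = wirt_zb F y" if "y \<in> S" for y
    using wirt_zb_minus_christoffel_real[OF assms(1,3) C3 that] by (simp add: F_def)
  have "wirt_zb (wirt_zb F) 0 = cnj (wirt_z (wirt_zb F) 0)"
    by (rule wirt_zb_real_valued[OF assms(1,2) real]) (use d(4) assms(2) in auto)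
  then have "c4 * 2 = cnj c5"
    using coef \<open>wirt_zb (wirt_z F) 0 = wirt_z (wirt_zb F) 0\<close> by simp
  moreover have "cnj c1 = c1" using real[OF assms(2)] coef(2) by simp
  ultimately show "c4 = - c1 * cnj c0 / 2" using c5 by (simp add: field_simps)
qed

lemma pt_comp:
  assumes "(\<lambda>s. u s x) differentiable (at t)" "(\<phi> has_field_derivative D) (at (u t x))"
  shows "pt (\<lambda>t x. \<phi> (u t x)) t x = pt u t x * D"
proof -
  have "((\<lambda>s. u s x) has_vector_derivative pt u t x) (at t)"
    using assms(1) vector_derivative_works unfolding pt_def by blast
  from field_vector_diff_chain_at[OF this assms(2)] show ?thesis
    unfolding pt_def by (simp add: o_def vector_derivative_at)
qed

lemma px_comp:
  assumes "(\<lambda>y. u t y) differentiable (at x)" "(\<phi> has_field_derivative D) (at (u t x))"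
  shows "px (\<lambda>t x. \<phi> (u t x)) t x = px u t x * D"
proof -
  have "((\<lambda>y. u t y) has_vector_derivative px u t x) (at x)"
    using assms(1) vector_derivative_works unfolding px_def by blast
  from field_vector_diff_chain_at[OF this assms(2)] show ?thesis
    unfolding px_def by (simp add: o_def vector_derivative_at)
qed

lemma px_px_comp:
  assumes "open V" "x \<in> V" "\<forall>y\<in>V. (\<lambda>y. u t y) differentiable (at y)"
    and "(\<lambda>y. px u t y) differentiable (at x)"
    and d\<phi>: "\<And>a. (\<phi> has_field_derivative \<phi>' a) (at a)"
    and "(\<phi>' has_field_derivative D) (at (u t x))"
  shows "px (px (\<lambda>t x. \<phi> (u t x))) t x = (px u t x)\<^sup>2 * D + px (px u) t x * \<phi>' (u t x)"
proof -
  have "((\<lambda>y. u t y) has_vector_derivative px u t x) (at x)"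
    using assms(2,3) vector_derivative_works unfolding px_def by blast
  from field_vector_diff_chain_at[OF this assms(6)]
  have "((\<lambda>y. \<phi>' (u t y)) has_vector_derivative px u t x * D) (at x)" by (simp add: o_def)
  moreover have "((\<lambda>y. px u t y) has_vector_derivative px (px u) t x) (at x)"
    using assms(4) vector_derivative_works unfolding px_def[of "px u"] by blast
  ultimately have "((\<lambda>y. px u t y * \<phi>' (u t y)) has_vector_derivative
      px u t x * (px u t x * D) + px (px u) t x * \<phi>' (u t x)) (at x)"
    by (intro has_vector_derivative_mult)
  then have "((\<lambda>y. px (\<lambda>t x. \<phi> (u t x)) t y) has_vector_derivative
      px u t x * (px u t x * D) + px (px u) t x * \<phi>' (u t x)) (at x)"
    by (rule has_vector_derivative_transform_within_open[OF _ assms(1,2)])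
      (use px_comp[OF _ d\<phi>] assms(3) in auto)
  then show ?thesis
    unfolding px_def[of "px (\<lambda>t x. \<phi> (u t x))"] by (simp add: vector_derivative_at power2_eq_square)
qed

text \<open>The chain rule for the holomorphic phi commutes with multiplication by i, so the only new
  term is phi''(u) u_x^2.\<close>

lemma SM_solution_change_of_coordinate:
  assumes sol: "SM_solution h S U u" and tx: "(t, x) \<in> U"
    and d\<phi>: "\<And>a. (\<phi> has_field_derivative \<phi>' a) (at a)"
    and d\<phi>': "\<And>a. (\<phi>' has_field_derivative \<phi>'' a) (at a)"
  shows "px (\<lambda>t x. \<phi> (u t x)) t x = px u t x * \<phi>' (u t x)"
    and "\<i> * pt (\<lambda>t x. \<phi> (u t x)) t x + px (px (\<lambda>t x. \<phi> (u t x))) t x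
      = (\<phi>' (u t x) * minus_christoffel h (u t x) + \<phi>'' (u t x)) * (px u t x)\<^sup>2"
proof -
  have U: "open U"
    and reg: "\<And>t x. (t, x) \<in> U \<Longrightarrow> (\<lambda>s. u s x) differentiable (at t)
      \<and> (\<lambda>y. u t y) differentiable (at x) \<and> (\<lambda>y. px u t y) differentiable (at x)"
    and eq: "\<i> * pt u t x + px (px u) t x = minus_christoffel h (u t x) * (px u t x)\<^sup>2"
    using sol tx unfolding SM_solution_def minus_christoffel_def by auto
  obtain e where e: "e > 0" "ball (t, x) e \<subseteq> U" using U tx open_contains_ball by blast
  have line: "(t, y) \<in> U" if "y \<in> ball x e" for y
  proof -
    have "dist (t, x) (t, y) = dist x y" by (simp add: dist_Pair_Pair)
    then show ?thesis using e(2) that by (auto simp: dist_commute)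
  qed
  show "px (\<lambda>t x. \<phi> (u t x)) t x = px u t x * \<phi>' (u t x)"
    using px_comp[OF _ d\<phi>] reg[OF tx] by blast
  have "pt (\<lambda>t x. \<phi> (u t x)) t x = pt u t x * \<phi>' (u t x)"
    using pt_comp[OF _ d\<phi>] reg[OF tx] by blast
  moreover have "px (px (\<lambda>t x. \<phi> (u t x))) t x
      = (px u t x)\<^sup>2 * \<phi>'' (u t x) + px (px u) t x * \<phi>' (u t x)"
    by (rule px_px_comp[OF open_ball[of x e] _ _ _ d\<phi> d\<phi>']) (use reg line e(1) tx in auto)
  ultimately have "\<i> * pt (\<lambda>t x. \<phi> (u t x)) t x + px (px (\<lambda>t x. \<phi> (u t x))) t x
      = \<i> * (pt u t x * \<phi>' (u t x)) + ((px u t x)\<^sup>2 * \<phi>'' (u t x) + px (px u) t x * \<phi>' (u t x))"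
    by simp
  also have "\<dots> = \<phi>' (u t x) * (\<i> * pt u t x + px (px u) t x) + \<phi>'' (u t x) * (px u t x)\<^sup>2"
    by (simp add: algebra_simps)
  finally show "\<i> * pt (\<lambda>t x. \<phi> (u t x)) t x + px (px (\<lambda>t x. \<phi> (u t x))) t x
      = (\<phi>' (u t x) * minus_christoffel h (u t x) + \<phi>'' (u t x)) * (px u t x)\<^sup>2"
    unfolding eq by (simp add: algebra_simps)
qed

text \<open>The gammas remove the holomorphic terms of degree at most 2, and nu2 = nu3 = 0 the mixed
  ones, so only cubic terms in a and conj a remain.\<close>

lemma normal_form_identity:
  fixes a c0 c1 c2 c3 c4 c5 \<gamma>1 \<gamma>2 \<gamma>3 :: complex
  assumes "\<gamma>1 = - c0 / 2" "c2 + 2 * \<gamma>1 * c0 + 6 * \<gamma>2 = 0"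
    "12 * \<gamma>3 + c3 + 2 * \<gamma>1 * c2 + 3 * \<gamma>2 * c0 = 0"
    and "c4 = c1 * cnj \<gamma>1" "c5 = 2 * \<gamma>1 * c1"
  defines "\<phi>' \<equiv> 1 + 2 * \<gamma>1 * a + 3 * \<gamma>2 * a\<^sup>2 + 4 * \<gamma>3 * a ^ 3"
  shows "\<phi>' * (c0 + c1 * cnj a + c2 * a + c3 * a\<^sup>2 + c4 * (cnj a)\<^sup>2 + c5 * a * cnj a)
      + (2 * \<gamma>1 + 6 * \<gamma>2 * a + 12 * \<gamma>3 * a\<^sup>2)
      - c1 * cnj (a + \<gamma>1 * a\<^sup>2 + \<gamma>2 * a ^ 3 + \<gamma>3 * a ^ 4) * \<phi>'\<^sup>2
    = a ^ 3 * (2 * \<gamma>1 * c3 + 3 * \<gamma>2 * c2 + 4 * \<gamma>3 * c0 + (3 * \<gamma>2 * c3 + 4 * \<gamma>3 * c2) * a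
        + 4 * \<gamma>3 * c3 * a\<^sup>2)
      + a\<^sup>2 * cnj a * (- c1 * \<phi>' * (3 * \<gamma>2 + 4 * \<gamma>3 * a) * (1 + cnj \<gamma>1 * cnj a))
      + a * (cnj a)\<^sup>2 * (- 2 * c1 * \<phi>' * \<gamma>1 * cnj \<gamma>1)
      + (cnj a) ^ 3 * (- c1 * \<phi>'\<^sup>2 * (cnj \<gamma>2 + cnj \<gamma>3 * cnj a))"
  using assms(1-5) unfolding \<phi>'_def
  by (simp only: complex_cnj_add complex_cnj_mult complex_cnj_power) algebra

lemma cubic_wirt_form_bound:
  fixes X Y Z W :: "complex \<Rightarrow> complex"
  assumes "continuous_on (cball 0 1) X" "continuous_on (cball 0 1) Y"
    "continuous_on (cball 0 1) Z" "continuous_on (cball 0 1) W"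
  shows "\<exists>K. \<forall>a. norm a \<le> 1 \<longrightarrow>
    norm (a ^ 3 * X a + a\<^sup>2 * cnj a * Y a + a * (cnj a)\<^sup>2 * Z a + (cnj a) ^ 3 * W a) \<le> K * norm a ^ 3"
proof -
  define N where "N a = norm (X a) + norm (Y a) + norm (Z a) + norm (W a)" for a
  have "continuous_on (cball 0 1) N" unfolding N_def using assms by (intro continuous_intros)
  then have "bounded (N ` cball 0 1)" by (intro compact_imp_bounded compact_continuous_image) auto
  then obtain K where K: "\<And>a. norm a \<le> 1 \<Longrightarrow> N a \<le> K"
    unfolding bounded_iff by (metis abs_le_D1 image_eqI mem_cball_0 real_norm_def)
  have "norm (a ^ 3 * X a + a\<^sup>2 * cnj a * Y a + a * (cnj a)\<^sup>2 * Z a + (cnj a) ^ 3 * W a) \<le> K * norm a ^ 3"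
    if a: "norm a \<le> 1" for a
  proof -
    have "norm (a ^ 3 * X a + a\<^sup>2 * cnj a * Y a + a * (cnj a)\<^sup>2 * Z a + (cnj a) ^ 3 * W a)
        \<le> norm (a ^ 3 * X a) + norm (a\<^sup>2 * cnj a * Y a) + norm (a * (cnj a)\<^sup>2 * Z a) + norm ((cnj a) ^ 3 * W a)"
      by (intro order_trans[OF norm_triangle_ineq] add_mono order_refl)
    also have "\<dots> = norm a ^ 3 * N a"
      by (simp add: N_def norm_mult norm_power power2_eq_square power3_eq_cube algebra_simps)
    also have "\<dots> \<le> norm a ^ 3 * K" using K[OF a] by (intro mult_left_mono) auto
    finally show ?thesis by (simp add: mult.commute)
  qed
  then show ?thesis by blast
qed

lemma normal_form_remainder_bound:
  fixes c0 c1 c2 c3 c4 c5 \<gamma>1 \<gamma>2 \<gamma>3 :: complex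
  assumes "\<gamma>1 = - c0 / 2" "c2 + 2 * \<gamma>1 * c0 + 6 * \<gamma>2 = 0"
    "12 * \<gamma>3 + c3 + 2 * \<gamma>1 * c2 + 3 * \<gamma>2 * c0 = 0"
    and "c4 = c1 * cnj \<gamma>1" "c5 = 2 * \<gamma>1 * c1"
  shows "\<exists>K. \<forall>a. norm a \<le> 1 \<longrightarrow>
    norm ((1 + 2 * \<gamma>1 * a + 3 * \<gamma>2 * a\<^sup>2 + 4 * \<gamma>3 * a ^ 3)
        * (c0 + c1 * cnj a + c2 * a + c3 * a\<^sup>2 + c4 * (cnj a)\<^sup>2 + c5 * a * cnj a)
      + (2 * \<gamma>1 + 6 * \<gamma>2 * a + 12 * \<gamma>3 * a\<^sup>2)
      - c1 * cnj (a + \<gamma>1 * a\<^sup>2 + \<gamma>2 * a ^ 3 + \<gamma>3 * a ^ 4)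
        * (1 + 2 * \<gamma>1 * a + 3 * \<gamma>2 * a\<^sup>2 + 4 * \<gamma>3 * a ^ 3)\<^sup>2) \<le> K * norm a ^ 3"
  unfolding normal_form_identity[OF assms]
  by (rule cubic_wirt_form_bound) (intro continuous_intros)+

lemma normal_form_near_zero:
  fixes \<gamma>1 \<gamma>2 \<gamma>3 :: complex
  shows "\<exists>r>0. \<forall>a. norm a < r \<longrightarrow>
    1 / 2 \<le> norm (1 + 2 * \<gamma>1 * a + 3 * \<gamma>2 * a\<^sup>2 + 4 * \<gamma>3 * a ^ 3)
    \<and> norm (1 + 2 * \<gamma>1 * a + 3 * \<gamma>2 * a\<^sup>2 + 4 * \<gamma>3 * a ^ 3) \<le> 3 / 2
    \<and> norm a \<le> 2 * norm (a + \<gamma>1 * a\<^sup>2 + \<gamma>2 * a ^ 3 + \<gamma>3 * a ^ 4)"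
proof -
  define p where "p a = 2 * \<gamma>1 * a + 3 * \<gamma>2 * a\<^sup>2 + 4 * \<gamma>3 * a ^ 3" for a
  define q where "q a = \<gamma>1 * a + \<gamma>2 * a\<^sup>2 + \<gamma>3 * a ^ 3" for a
  have "isCont p 0" "isCont q 0" unfolding p_def q_def by (intro continuous_intros)+
  then have "\<forall>e>0. \<exists>r>0. \<forall>a. dist a 0 < r \<longrightarrow> dist (p a) (p 0) < e"
    "\<forall>e>0. \<exists>r>0. \<forall>a. dist a 0 < r \<longrightarrow> dist (q a) (q 0) < e"
    unfolding continuous_at_eps_delta by blast+
  moreover have "p 0 = 0" "q 0 = 0" by (simp_all add: p_def q_def)
  ultimately obtain r1 r2 where r: "r1 > 0" "\<And>a. norm a < r1 \<Longrightarrow> norm (p a) < 1 / 2"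
    "r2 > 0" "\<And>a. norm a < r2 \<Longrightarrow> norm (q a) < 1 / 2"
    by (metis dist_0_norm dist_commute dist_self zero_less_divide_1_iff zero_less_numeral)
  have "1 / 2 \<le> norm (1 + p a) \<and> norm (1 + p a) \<le> 3 / 2 \<and> norm a \<le> 2 * norm (a * (1 + q a))"
    if a: "norm a < min r1 r2" for a
  proof -
    have "norm (p a) < 1 / 2" "norm (q a) < 1 / 2" using r(2,4) a by auto
    moreover have "1 - norm (q a) \<le> norm (1 + q a)"
      using norm_triangle_ineq2[of 1 "- q a"] by simp
    ultimately have "norm a * (1 / 2) \<le> norm a * norm (1 + q a)"
      by (intro mult_left_mono) auto
    moreover have "1 - norm (p a) \<le> norm (1 + p a)" "norm (1 + p a) \<le> 1 + norm (p a)"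
      using norm_triangle_ineq2[of 1 "- p a"] norm_triangle_ineq[of 1 "p a"] by simp_all
    ultimately show ?thesis using \<open>norm (p a) < 1 / 2\<close> by (simp add: norm_mult)
  qed
  moreover have "1 + 2 * \<gamma>1 * a + 3 * \<gamma>2 * a\<^sup>2 + 4 * \<gamma>3 * a ^ 3 = 1 + p a"
    "a + \<gamma>1 * a\<^sup>2 + \<gamma>2 * a ^ 3 + \<gamma>3 * a ^ 4 = a * (1 + q a)" for a
    by (simp_all add: p_def q_def algebra_simps power2_eq_square power3_eq_cube power4_eq_xxxx)
  moreover have "min r1 r2 > 0" using r by simp
  ultimately show ?thesis by metis
qed

lemma residual_estimate:
  fixes d E R a p w :: complex and A B :: real
  assumes "1 / 2 \<le> norm d" "norm d \<le> 3 / 2" "norm a \<le> 2 * norm w" "0 \<le> A" "0 \<le> B"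
    and "norm E \<le> A * norm a ^ 3" "norm R \<le> B * norm a ^ 3"
  shows "norm ((d * E + R) * p\<^sup>2) \<le> 32 * (3 / 2 * A + B) * norm w ^ 3 * norm (p * d) ^ 2"
proof -
  have "norm (d * E) \<le> 3 / 2 * (A * norm a ^ 3)"
    unfolding norm_mult by (rule mult_mono) (use assms in auto)
  then have "norm (d * E + R) \<le> (3 / 2 * A + B) * norm a ^ 3"
    using norm_triangle_ineq[of "d * E" R] assms(7) by (simp add: algebra_simps)
  also have "\<dots> \<le> (3 / 2 * A + B) * (2 * norm w) ^ 3"
    using assms by (intro mult_left_mono power_mono) auto
  also have "\<dots> = 8 * (3 / 2 * A + B) * norm w ^ 3"
    by (simp add: power_mult_distrib algebra_simps)
  finally have 1: "norm (d * E + R) \<le> 8 * (3 / 2 * A + B) * norm w ^ 3" .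
  have "norm p \<le> 2 * norm (p * d)"
    using mult_left_mono[OF assms(1), of "norm p"] by (simp add: norm_mult)
  then have 2: "norm p ^ 2 \<le> 4 * norm (p * d) ^ 2"
    using power_mono[of "norm p" "2 * norm (p * d)" 2] by (simp add: power_mult_distrib)
  have "norm ((d * E + R) * p\<^sup>2) = norm (d * E + R) * norm p ^ 2"
    by (simp add: norm_mult norm_power)
  also have "\<dots> \<le> (8 * (3 / 2 * A + B) * norm w ^ 3) * (4 * norm (p * d) ^ 2)"
    using 1 2 assms by (intro mult_mono) auto
  finally have "norm ((d * E + R) * p\<^sup>2) \<le> (8 * (3 / 2 * A + B) * norm w ^ 3) * (4 * norm (p * d) ^ 2)" .
  then show ?thesis by (simp add: algebra_simps)
qed

lemma normal_form_equation:
  fixes h :: "complex \<Rightarrow> real" and c0 c1 c2 c3 c4 c5 \<gamma>1 \<gamma>2 \<gamma>3 :: complex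
  assumes "\<delta>0 > 0"
    and expansion: "\<And>z. norm z < \<delta>0 \<Longrightarrow> norm (minus_christoffel h z - (c0 + c1 * cnj z + c2 * z
        + c3 * z\<^sup>2 + c4 * (cnj z)\<^sup>2 + c5 * z * cnj z)) \<le> C0 * norm z ^ 3"
    and "\<gamma>1 = - c0 / 2" "c2 + 2 * \<gamma>1 * c0 + 6 * \<gamma>2 = 0"
      "12 * \<gamma>3 + c3 + 2 * \<gamma>1 * c2 + 3 * \<gamma>2 * c0 = 0"
    and "c4 = c1 * cnj \<gamma>1" "c5 = 2 * \<gamma>1 * c1"
  shows "\<exists>C \<delta>. \<delta> > 0 \<and> (\<forall>U u. SM_solution h S U u \<longrightarrow>
       (let w = (\<lambda>t x. u t x + \<gamma>1 * (u t x)\<^sup>2 + \<gamma>2 * (u t x) ^ 3 + \<gamma>3 * (u t x) ^ 4) in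
        \<forall>(t,x)\<in>U. norm (u t x) < \<delta> \<longrightarrow>
          norm (\<i> * pt w t x + px (px w) t x - c1 * cnj (w t x) * (px w t x)\<^sup>2)
            \<le> C * norm (w t x) ^ 3 * norm (px w t x) ^ 2))"
proof -
  define \<phi> where "\<phi> a = a + \<gamma>1 * a\<^sup>2 + \<gamma>2 * a ^ 3 + \<gamma>3 * a ^ 4" for a
  define \<phi>' where "\<phi>' a = 1 + 2 * \<gamma>1 * a + 3 * \<gamma>2 * a\<^sup>2 + 4 * \<gamma>3 * a ^ 3" for a
  define \<phi>'' where "\<phi>'' a = 2 * \<gamma>1 + 6 * \<gamma>2 * a + 12 * \<gamma>3 * a\<^sup>2" for a
  define P where "P z = c0 + c1 * cnj z + c2 * z + c3 * z\<^sup>2 + c4 * (cnj z)\<^sup>2 + c5 * z * cnj z" for z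
  have d\<phi>: "(\<phi> has_field_derivative \<phi>' a) (at a)" "(\<phi>' has_field_derivative \<phi>'' a) (at a)" for a
    unfolding \<phi>_def \<phi>'_def \<phi>''_def by (auto intro!: derivative_eq_intros)
  have "\<exists>K. \<forall>a. norm a \<le> 1 \<longrightarrow>
      norm (\<phi>' a * P a + \<phi>'' a - c1 * cnj (\<phi> a) * (\<phi>' a)\<^sup>2) \<le> K * norm a ^ 3"
    using normal_form_remainder_bound[OF assms(3-7)] unfolding \<phi>_def \<phi>'_def \<phi>''_def P_def .
  then obtain K where K: "\<And>a. norm a \<le> 1 \<Longrightarrow>
      norm (\<phi>' a * P a + \<phi>'' a - c1 * cnj (\<phi> a) * (\<phi>' a)\<^sup>2) \<le> \<bar>K\<bar> * norm a ^ 3"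
    by (meson abs_ge_self mult_right_mono norm_ge_zero order_trans zero_le_power)
  obtain r where r: "r > 0" "\<And>a. norm a < r \<Longrightarrow>
      1 / 2 \<le> norm (\<phi>' a) \<and> norm (\<phi>' a) \<le> 3 / 2 \<and> norm a \<le> 2 * norm (\<phi> a)"
    using normal_form_near_zero[of \<gamma>1 \<gamma>2 \<gamma>3] unfolding \<phi>_def \<phi>'_def by blast
  define \<delta> where "\<delta> = min \<delta>0 (min r 1)"
  define C where "C = 32 * (3 / 2 * \<bar>C0\<bar> + \<bar>K\<bar>)"
  have "norm (\<i> * pt w t x + px (px w) t x - c1 * cnj (w t x) * (px w t x)\<^sup>2)
      \<le> C * norm (w t x) ^ 3 * norm (px w t x) ^ 2"
    if sol: "SM_solution h S U u" "(t, x) \<in> U" and small: "norm (u t x) < \<delta>"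
      and w: "w = (\<lambda>t x. \<phi> (u t x))" for U u t x w
  proof -
    define a p where "a = u t x" and "p = px u t x"
    have wx: "px w t x = p * \<phi>' a"
      and eqn: "\<i> * pt w t x + px (px w) t x = (\<phi>' a * minus_christoffel h a + \<phi>'' a) * p\<^sup>2"
      using SM_solution_change_of_coordinate[OF sol d\<phi>] by (simp_all add: w a_def p_def)
    have residual: "\<i> * pt w t x + px (px w) t x - c1 * cnj (w t x) * (px w t x)\<^sup>2
        = (\<phi>' a * (minus_christoffel h a - P a)
          + (\<phi>' a * P a + \<phi>'' a - c1 * cnj (\<phi> a) * (\<phi>' a)\<^sup>2)) * p\<^sup>2"
      unfolding eqn wx by (simp add: w a_def algebra_simps power2_eq_square)
    have "norm (minus_christoffel h a - P a) \<le> \<bar>C0\<bar> * norm a ^ 3"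
      using expansion[of a] small unfolding P_def a_def \<delta>_def
      by (smt (verit) abs_ge_self mult_right_mono norm_ge_zero zero_le_power)
    moreover have "norm (\<phi>' a * P a + \<phi>'' a - c1 * cnj (\<phi> a) * (\<phi>' a)\<^sup>2) \<le> \<bar>K\<bar> * norm a ^ 3"
      using K small by (simp add: a_def \<delta>_def)
    moreover have "1 / 2 \<le> norm (\<phi>' a)" "norm (\<phi>' a) \<le> 3 / 2" "norm a \<le> 2 * norm (\<phi> a)"
      using r(2) small by (auto simp: a_def \<delta>_def)
    ultimately have "norm ((\<phi>' a * (minus_christoffel h a - P a)
          + (\<phi>' a * P a + \<phi>'' a - c1 * cnj (\<phi> a) * (\<phi>' a)\<^sup>2)) * p\<^sup>2)
        \<le> C * norm (\<phi> a) ^ 3 * norm (p * \<phi>' a) ^ 2"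
      unfolding C_def by (intro residual_estimate) auto
    then show ?thesis unfolding residual unfolding wx by (simp add: w a_def)
  qed
  moreover have "\<delta> > 0" using assms(1) r(1) by (simp add: \<delta>_def)
  moreover have "(\<lambda>t x. u t x + \<gamma>1 * (u t x)\<^sup>2 + \<gamma>2 * (u t x) ^ 3 + \<gamma>3 * (u t x) ^ 4)
      = (\<lambda>t x. \<phi> (u t x))" for u :: "real \<Rightarrow> real \<Rightarrow> complex"
    by (simp add: \<phi>_def)
  ultimately show ?thesis unfolding Let_def by fastforce
qed

theorem corollary5p1:
  fixes h :: "complex \<Rightarrow> real" and S :: "complex set"
    and c0 c1 c2 c3 c4 c5 \<gamma>1 \<gamma>2 \<gamma>3 :: complex
  assumes S_open: "open S" and S0: "0 \<in> S"
    and h_pos: "\<forall>z\<in>S. h z > 0"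
    and h_smooth: "smooth_on S (\<lambda>z. complex_of_real (h z))"
    and Q: "intrinsic_vanishing_at0 h"
    and expansion: "\<exists>C \<delta>. \<delta> > 0 \<and> (\<forall>z. norm z < \<delta> \<longrightarrow>
        norm (- wirt_z (\<lambda>z. complex_of_real (h z)) z / complex_of_real (h z)
              - (c0 + c1 * cnj z + c2 * z + c3 * z\<^sup>2 + c4 * (cnj z)\<^sup>2 + c5 * z * cnj z))
          \<le> C * norm z ^ 3)"
    and g1: "\<gamma>1 = - c0 / 2"
    and g2: "c2 + 2 * \<gamma>1 * c0 + 6 * \<gamma>2 = 0"
    and g3: "12 * \<gamma>3 + c3 + 2 * \<gamma>1 * c2 + 3 * \<gamma>2 * c0 = 0"
  shows "c5 - 2 * \<gamma>1 * c1 = 0 \<and> c4 - c1 * cnj \<gamma>1 = 0 \<and>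
    (\<exists>C \<delta>. \<delta> > 0 \<and> (\<forall>U u. SM_solution h S U u \<longrightarrow>
       (let w = (\<lambda>t x. u t x + \<gamma>1 * (u t x)\<^sup>2 + \<gamma>2 * (u t x) ^ 3 + \<gamma>3 * (u t x) ^ 4) in
        \<forall>(t,x)\<in>U. norm (u t x) < \<delta> \<longrightarrow>
          norm (\<i> * pt w t x + px (px w) t x - c1 * cnj (w t x) * (px w t x)\<^sup>2)
            \<le> C * norm (w t x) ^ 3 * norm (px w t x) ^ 2)))"
proof -
  obtain C0 \<delta>0 where \<delta>0: "\<delta>0 > 0" and bound: "\<And>z. norm z < \<delta>0 \<Longrightarrow>
      norm (minus_christoffel h z - (c0 + c1 * cnj z + c2 * z + c3 * z\<^sup>2 + c4 * (cnj z)\<^sup>2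
        + c5 * z * cnj z)) \<le> C0 * norm z ^ 3"
    using expansion unfolding minus_christoffel_def by blast
  have "c5 = - c0 * c1" "c4 = - c1 * cnj c0 / 2"
    using intrinsic_vanishing_coefficients[OF S_open S0 h_pos h_smooth Q \<delta>0 bound] by simp_all
  then have \<nu>: "c5 = 2 * \<gamma>1 * c1" "c4 = c1 * cnj \<gamma>1" using g1 by simp_all
  show ?thesis
    using \<nu> normal_form_equation[OF \<delta>0 bound g1 g2 g3 \<nu>(2,1)] by simp
qed

end
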